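(* Let $m\le n$ and let $\bm W\in\mathbb{R}^{m\times n}$ be a (deterministic) matrix with $\bm W\bm W^T=\bm I_m$ and $\bm\xi_m^T\bm W\bm\xi_n=1$. Let $\bm x\in\mathbb{R}^n$ be a random vector with $\mathbb{E}[\bm x]=\mu\bm 1_n$ and $\operatorname{Cov}[\bm x]=\sigma^2\bm I_n$, where $\mu\in\mathbb{R}$ and $\sigma>0$. Then \[ \mathbb{E}[\bm W\bm x]=\mu\sqrt{\tfrac nm}\,\bm 1_m,\qquad \operatorname{Cov}[\bm W\bm x]=\sigma^2\bm I_m. \]
   Context: $\bm 1_k$ denotes the all-ones vector in $\mathbb{R}^k$ and $\bm\xi_k=\frac{1}{\sqrt k}\bm 1_k$. *)

theory Defs
  imports "HOL-Probability.Probability"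
begin

definition ones_vec :: "real ^ 'k" where
  "ones_vec = (\<chi> i. 1)"

definition xi_vec :: "real ^ 'k" where
  "xi_vec = (\<chi> i. 1 / sqrt (real CARD('k)))"

definition mean_vec :: "'a measure \<Rightarrow> ('a \<Rightarrow> real ^ 'k) \<Rightarrow> real ^ 'k" where
  "mean_vec M X = (\<chi> i. integral\<^sup>L M (\<lambda>\<omega>. X \<omega> $ i))"

definition cov_mat :: "'a measure \<Rightarrow> ('a \<Rightarrow> real ^ 'k) \<Rightarrow> real ^ 'k ^ 'k" where
  "cov_mat M X = (\<chi> i j. integral\<^sup>L M
      (\<lambda>\<omega>. (X \<omega> $ i - mean_vec M X $ i) * (X \<omega> $ j - mean_vec M X $ j)))"

end

theory Submission
  imports Defs
begin

text \<open>
  By linearity of expectation, \<open>E[W x] = W E[x] = \<mu> W 1\<^sub>n\<close> and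
  \<open>Cov[W x] = W Cov[x] W\<^sup>T = \<sigma>\<^sup>2 W W\<^sup>T = \<sigma>\<^sup>2 I\<^sub>m\<close>.
  It remains to compute \<open>W 1\<^sub>n\<close>. Since \<open>W\<^sup>T\<close> is an isometry, \<open>W\<close> is a
  contraction, so \<open>|W 1\<^sub>n| \<le> \<surd>n\<close>; the hypothesis on \<open>\<xi>\<close> says
  \<open>\<langle>1\<^sub>m, W 1\<^sub>n\<rangle> = \<surd>m \<surd>n = |1\<^sub>m| \<surd>n\<close>. Hence equality holds in
  Cauchy-Schwarz and \<open>W 1\<^sub>n = \<surd>(n/m) 1\<^sub>m\<close>.
\<close>

lemma inner_matrix_vector_mult:
  fixes A :: "real ^ 'n ^ 'm"
  shows "(A *v x) \<bullet> y = x \<bullet> (transpose A *v y)"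
  by (metis dot_lmul_matrix vector_transpose_matrix)

lemma norm_transpose_matrix_vector_mult:
  fixes A :: "real ^ 'n ^ 'm"
  assumes "A ** transpose A = mat 1"
  shows "norm (transpose A *v y) = norm y"
proof -
  have "(transpose A *v y) \<bullet> (transpose A *v y) = y \<bullet> (A *v (transpose A *v y))"
    by (metis inner_matrix_vector_mult transpose_transpose)
  also have "\<dots> = y \<bullet> y"
    by (simp add: matrix_vector_mul_assoc assms del: transpose_matrix_vector)
  finally show ?thesis
    by (simp add: norm_eq_sqrt_inner)
qed

lemma norm_matrix_vector_mult_le:
  fixes A :: "real ^ 'n ^ 'm"
  assumes "A ** transpose A = mat 1"
  shows "norm (A *v x) \<le> norm x"
proof -
  have "norm (A *v x) ^ 2 = x \<bullet> (transpose A *v (A *v x))"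
    by (simp add: power2_norm_eq_inner inner_matrix_vector_mult del: transpose_matrix_vector)
  also have "\<dots> \<le> norm x * norm (A *v x)"
    using norm_cauchy_schwarz norm_transpose_matrix_vector_mult[OF assms] by metis
  finally show ?thesis
    by (cases "A *v x = 0") (simp_all add: power2_eq_square mult_le_cancel_right)
qed

lemma eq_scaleR_if_norm_mult_le_inner:
  fixes x y :: "'a::real_inner"
  assumes "x \<noteq> 0" and "norm y \<le> r" and "norm x * r \<le> x \<bullet> y"
  shows "y = (r / norm x) *\<^sub>R x"
proof -
  have "norm x * r \<le> norm x * norm y"
    using assms(3) norm_cauchy_schwarz order_trans by blast
  with assms(1,2) have "norm y = r"
    by (simp add: mult_le_cancel_left_pos)
  moreover have "x \<bullet> y = norm x * norm y"
    using assms(3) \<open>norm y = r\<close> by (metis antisym norm_cauchy_schwarz)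
  ultimately have "norm x *\<^sub>R y = r *\<^sub>R x"
    by (metis norm_cauchy_schwarz_eq)
  then have "y = inverse (norm x) *\<^sub>R (r *\<^sub>R x)"
    using assms(1) by (metis norm_eq_zero scaleR_scaleR left_inverse scaleR_one)
  then show ?thesis
    by (simp add: divide_inverse_commute)
qed

lemma norm_ones_vec: "norm (ones_vec :: real ^ 'k) = sqrt (real CARD('k))"
  by (simp add: norm_eq_sqrt_inner ones_vec_def inner_vec_def)

lemma xi_vec_eq_scaleR_ones_vec: "(xi_vec :: real ^ 'k) = (1 / sqrt (real CARD('k))) *\<^sub>R ones_vec"
  by (simp add: xi_vec_def ones_vec_def vec_eq_iff)

lemma matrix_vector_mult_ones_vec:
  fixes W :: "real ^ 'n ^ 'm"
  assumes "W ** transpose W = mat 1"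
    and "(xi_vec :: real ^ 'm) \<bullet> (W *v (xi_vec :: real ^ 'n)) = 1"
  shows "W *v ones_vec = sqrt (real CARD('n) / real CARD('m)) *\<^sub>R ones_vec"
proof -
  let ?m = "sqrt (real CARD('m))" and ?n = "sqrt (real CARD('n))"
  have "(ones_vec :: real ^ 'm) \<bullet> (W *v ones_vec) = ?m * ?n"
    using assms(2)
    by (simp add: xi_vec_eq_scaleR_ones_vec matrix_vector_mult_scaleR field_simps)
  moreover have "norm (W *v ones_vec) \<le> ?n"
    using norm_matrix_vector_mult_le[OF assms(1)] norm_ones_vec by metis
  moreover have "(ones_vec :: real ^ 'm) \<noteq> 0"
    by (simp add: ones_vec_def vec_eq_iff)
  ultimately have "W *v ones_vec = (?n / norm (ones_vec :: real ^ 'm)) *\<^sub>R ones_vec"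
    by (intro eq_scaleR_if_norm_mult_le_inner) (simp_all add: norm_ones_vec mult.commute)
  then show ?thesis
    by (simp add: norm_ones_vec real_sqrt_divide)
qed

lemma mean_vec_matrix_vector_mult:
  fixes A :: "real ^ 'n ^ 'm" and X :: "'a \<Rightarrow> real ^ 'n"
  assumes "\<And>k. integrable M (\<lambda>\<omega>. X \<omega> $ k)"
  shows "mean_vec M (\<lambda>\<omega>. A *v X \<omega>) = A *v mean_vec M X"
  using assms by (simp add: mean_vec_def matrix_vector_mult_def vec_eq_iff)

lemma integrable_mult_if_square_integrable:
  fixes f g :: "'a \<Rightarrow> real"
  assumes "f \<in> borel_measurable M" and "g \<in> borel_measurable M"
    and "integrable M (\<lambda>x. (f x)\<^sup>2)" and "integrable M (\<lambda>x. (g x)\<^sup>2)"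
  shows "integrable M (\<lambda>x. f x * g x)"
proof (rule Bochner_Integration.integrable_bound)
  show "integrable M (\<lambda>x. (f x)\<^sup>2 + (g x)\<^sup>2)"
    using assms(3,4) by simp
  show "(\<lambda>x. f x * g x) \<in> borel_measurable M"
    using assms(1,2) by measurable
  have "\<bar>a * b\<bar> \<le> a\<^sup>2 + b\<^sup>2" for a b :: real
  proof -
    have "2 * (\<bar>a\<bar> * \<bar>b\<bar>) \<le> a\<^sup>2 + b\<^sup>2"
      using sum_squares_bound[of "\<bar>a\<bar>" "\<bar>b\<bar>"] by (simp add: mult.assoc)
    moreover have "0 \<le> \<bar>a\<bar> * \<bar>b\<bar>"
      by simp
    ultimately show ?thesis
      unfolding abs_mult by linarith
  qed
  then show "AE x in M. norm (f x * g x) \<le> norm ((f x)\<^sup>2 + (g x)\<^sup>2)"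
    by simp
qed

lemma integral_products_matrix_vector_mult:
  fixes A :: "real ^ 'n ^ 'm" and Y :: "'a \<Rightarrow> real ^ 'n"
  assumes "\<And>k l. integrable M (\<lambda>\<omega>. Y \<omega> $ k * Y \<omega> $ l)"
  shows "(\<chi> i j. \<integral>\<omega>. (A *v Y \<omega>) $ i * (A *v Y \<omega>) $ j \<partial>M)
           = A ** (\<chi> k l. \<integral>\<omega>. Y \<omega> $ k * Y \<omega> $ l \<partial>M) ** transpose A"
proof -
  have "(\<integral>\<omega>. (A *v Y \<omega>) $ i * (A *v Y \<omega>) $ j \<partial>M)
          = (\<integral>\<omega>. (\<Sum>k\<in>UNIV. \<Sum>l\<in>UNIV. (A $ i $ k * A $ j $ l) * (Y \<omega> $ k * Y \<omega> $ l)) \<partial>M)" for i j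
    by (simp add: matrix_vector_mult_def sum_product mult_ac)
  also have "\<dots> i j = (\<Sum>k\<in>UNIV. \<Sum>l\<in>UNIV. (A $ i $ k * A $ j $ l) * (\<integral>\<omega>. Y \<omega> $ k * Y \<omega> $ l \<partial>M))" for i j
    using assms by (simp add: Bochner_Integration.integral_sum)
  also have "\<dots> i j = (\<Sum>l\<in>UNIV. \<Sum>k\<in>UNIV. A $ i $ k * (\<integral>\<omega>. Y \<omega> $ k * Y \<omega> $ l \<partial>M) * A $ j $ l)" for i j
    by (subst sum.swap) (simp add: mult_ac)
  also have "\<dots> i j = (A ** (\<chi> k l. \<integral>\<omega>. Y \<omega> $ k * Y \<omega> $ l \<partial>M) ** transpose A) $ i $ j" for i j
    by (simp add: matrix_matrix_mult_def transpose_def sum_distrib_right)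
  finally show ?thesis
    by (simp add: vec_eq_iff)
qed

lemma cov_mat_matrix_vector_mult:
  fixes A :: "real ^ 'n ^ 'm" and X :: "'a \<Rightarrow> real ^ 'n"
  assumes "finite_measure M" and "X \<in> borel_measurable M"
    and "\<And>k. integrable M (\<lambda>\<omega>. (X \<omega> $ k)\<^sup>2)"
  shows "cov_mat M (\<lambda>\<omega>. A *v X \<omega>) = A ** cov_mat M X ** transpose A"
proof -
  interpret finite_measure M by fact
  define c where "c = mean_vec M X"
  have X_nth_measurable: "(\<lambda>\<omega>. X \<omega> $ k) \<in> borel_measurable M" for k
    using measurable_compose[OF assms(2) borel_measurable_nth] by simp
  have centered_measurable: "(\<lambda>\<omega>. (X \<omega> - c) $ k) \<in> borel_measurable M" for k
    using X_nth_measurable by simp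
  have "integrable M (\<lambda>\<omega>. X \<omega> $ k)" for k
    using square_integrable_imp_integrable[OF X_nth_measurable assms(3)] .
  then have mean: "mean_vec M (\<lambda>\<omega>. A *v X \<omega>) = A *v c"
    unfolding c_def by (rule mean_vec_matrix_vector_mult)
  have "integrable M (\<lambda>\<omega>. ((X \<omega> - c) $ k)\<^sup>2)" for k
  proof -
    have "(\<lambda>\<omega>. ((X \<omega> - c) $ k)\<^sup>2) = (\<lambda>\<omega>. (X \<omega> $ k)\<^sup>2 - 2 * c $ k * X \<omega> $ k + (c $ k)\<^sup>2)"
      by (simp add: power2_diff algebra_simps)
    then show ?thesis
      using assms(3) \<open>integrable M (\<lambda>\<omega>. X \<omega> $ k)\<close> by simp
  qed
  then have "integrable M (\<lambda>\<omega>. (X \<omega> - c) $ k * (X \<omega> - c) $ l)" for k l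
    by (intro integrable_mult_if_square_integrable centered_measurable)
  then have "(\<chi> i j. \<integral>\<omega>. (A *v (X \<omega> - c)) $ i * (A *v (X \<omega> - c)) $ j \<partial>M)
               = A ** cov_mat M X ** transpose A"
    unfolding cov_mat_def c_def by (subst integral_products_matrix_vector_mult) simp_all
  then show ?thesis
    by (simp add: cov_mat_def mean matrix_vector_mult_diff_distrib)
qed

theorem proposition3:
  fixes M :: "'a measure"
    and W :: "real ^ 'n ^ 'm"
    and X :: "'a \<Rightarrow> real ^ 'n"
    and \<mu> \<sigma> :: real
  assumes "prob_space M"
    and "CARD('m) \<le> CARD('n)"
    and "W ** transpose W = mat 1"
    and "(xi_vec :: real ^ 'm) \<bullet> (W *v (xi_vec :: real ^ 'n)) = 1"
    and "X \<in> borel_measurable M"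
    and "\<And>i. integrable M (\<lambda>\<omega>. (X \<omega> $ i)\<^sup>2)"
    and "mean_vec M X = \<mu> *\<^sub>R ones_vec"
    and "cov_mat M X = \<sigma>\<^sup>2 *\<^sub>R mat 1"
    and "\<sigma> > 0"
  shows "mean_vec M (\<lambda>\<omega>. W *v X \<omega>) = (\<mu> * sqrt (real CARD('n) / real CARD('m))) *\<^sub>R ones_vec \<and>
         cov_mat M (\<lambda>\<omega>. W *v X \<omega>) = \<sigma>\<^sup>2 *\<^sub>R mat 1"
proof -
  interpret prob_space M by fact
  have "integrable M (\<lambda>\<omega>. X \<omega> $ k)" for k
    using square_integrable_imp_integrable[OF _ assms(6)]
      measurable_compose[OF assms(5) borel_measurable_nth] by simp
  then have "mean_vec M (\<lambda>\<omega>. W *v X \<omega>) = W *v (\<mu> *\<^sub>R ones_vec)"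
    by (simp add: mean_vec_matrix_vector_mult assms(7))
  also have "\<dots> = \<mu> *\<^sub>R (W *v ones_vec)"
    by (rule matrix_vector_mult_scaleR)
  also have "\<dots> = (\<mu> * sqrt (real CARD('n) / real CARD('m))) *\<^sub>R ones_vec"
    unfolding matrix_vector_mult_ones_vec[OF assms(3,4)] by (rule scaleR_scaleR)
  finally have mean: "mean_vec M (\<lambda>\<omega>. W *v X \<omega>) = \<dots>" .
  have "cov_mat M (\<lambda>\<omega>. W *v X \<omega>) = W ** (\<sigma>\<^sup>2 *\<^sub>R mat 1) ** transpose W"
    using cov_mat_matrix_vector_mult[OF finite_measure_axioms assms(5,6)] assms(8) by simp
  also have "\<dots> = \<sigma>\<^sup>2 *\<^sub>R mat 1"
    using assms(3) by (simp add: matrix_scalar_ac scalar_matrix_assoc[symmetric])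
  finally show ?thesis
    using mean by blast
qed

end
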